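(* There exists a sequence $(S_i)_{i=1}^\infty$ of functions, each submultiplicative on $[1,\infty)$, such that for every nonempty finite set $A\subset\mathbb N$ and every $j\in\mathbb N\setminus A$, $$\sup_{n\ge1}\frac{S_j(n)}{\max_{i\in A}S_i(n)}=\infty.$$
   Context: Let $2\le n_0\le\infty$ and let $S$ be a real-valued function on $[1,n_0]$ (on $[1,\infty)$ if $n_0=\infty$). $S$ is called submultiplicative on $[1,n_0]$ if: (a) $S$ is piecewise-linear, continuous, strictly increasing and concave; (b) $S(x)=x$ for $1\le x\le 2$; (c) $S(xy)\le S(x)S(y)$ for all $x,y$ with $1\le x,y,xy\le n_0$. *)

theory Defs
  imports "HOL-Analysis.Analysis"
begin

definition piecewise_linear_on :: "real set \<Rightarrow> (real \<Rightarrow> real) \<Rightarrow> bool" where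
  "piecewise_linear_on I S \<longleftrightarrow>
     (\<forall>a b. a \<in> I \<and> b \<in> I \<and> a \<le> b \<longrightarrow>
       (\<exists>P. finite P \<and> a \<in> P \<and> b \<in> P \<and> P \<subseteq> {a..b} \<and>
         (\<forall>x y. x \<in> P \<and> y \<in> P \<and> x < y \<and> {x<..<y} \<inter> P = {} \<longrightarrow>
            (\<exists>m c. \<forall>t\<in>{x..y}. S t = m * t + c))))"

definition submultiplicative_inf :: "(real \<Rightarrow> real) \<Rightarrow> bool" where
  "submultiplicative_inf S \<longleftrightarrow>
     piecewise_linear_on {1..} S \<and> continuous_on {1..} S \<and>
     strict_mono_on {1..} S \<and> concave_on {1..} S \<and>
     (\<forall>x\<in>{1..2}. S x = x) \<and>
     (\<forall>x y. 1 \<le> x \<longrightarrow> 1 \<le> y \<longrightarrow> S (x * y) \<le> S x * S y)"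

end

theory Submission
  imports Defs "HOL-Library.Nat_Bijection"
begin

text \<open>Every index \<open>i\<close> owns infinitely many \<open>n\<close> (via the Cantor pairing). Let \<open>\<phi>\<^sub>i\<close> be the
  lower envelope of the lines \<open>t\<close> and \<open>t / 2^n + 2^n\<close> for the \<open>n\<close> not owned by \<open>i\<close>.
  As an infimum of lines with nonnegative coefficients, \<open>\<phi>\<^sub>i\<close> is subadditive, and at
  \<open>t = 4^n\<close> it is at most \<open>2^(n+1)\<close> unless \<open>i\<close> owns \<open>n\<close>, in which case it is at least
  \<open>5/2 * 2^n\<close>. Put \<open>S\<^sub>i(x) = inf\<^sub>k ((x - 1) / 2^k + 2^\<phi>\<^sub>i(k))\<close>: again a lower envelope of
  lines, hence concave and continuous, piecewise linear since near any point only finitely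
  many lines matter, the identity on \<open>[1, 2]\<close>, and submultiplicative because the product of
  the lines \<open>k\<close> and \<open>l\<close> dominates the line \<open>k + l\<close> by subadditivity of \<open>\<phi>\<^sub>i\<close>. At
  \<open>x = 2^(4^n + 2^(n+1))\<close> with \<open>n\<close> owned by \<open>j\<close>, every \<open>S\<^sub>i\<close> with \<open>i \<noteq> j\<close> is at most
  \<open>2^(2^(n+1)+1)\<close>, whereas \<open>S\<^sub>j(x) \<ge> 2^(2^(n+1) + 2^(n-2) - 1)\<close>.\<close>

section \<open>Lower envelopes of lines\<close>

definition lower_envelope :: "(real \<times> real) set \<Rightarrow> real \<Rightarrow> real" where
  "lower_envelope L t = (INF (m, c)\<in>L. m * t + c)"

lemma lower_envelope_le:
  assumes "L \<subseteq> {0..} \<times> {0..}" "0 \<le> t" "(m, c) \<in> L"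
  shows "lower_envelope L t \<le> m * t + c"
proof -
  have bdd: "bdd_below ((\<lambda>(m, c). m * t + c) ` L)"
    using assms(1,2) by (intro bdd_belowI[of _ 0]) auto
  show ?thesis
    unfolding lower_envelope_def using cINF_lower[OF bdd assms(3)] by simp
qed

lemma lower_envelope_greatest:
  assumes "L \<noteq> {}" "\<And>m c. (m, c) \<in> L \<Longrightarrow> y \<le> m * t + c"
  shows "y \<le> lower_envelope L t"
  unfolding lower_envelope_def using assms by (intro cINF_greatest) auto

lemma lower_envelope_nonneg:
  assumes "L \<noteq> {}" "L \<subseteq> {0..} \<times> {0..}" "0 \<le> t"
  shows "0 \<le> lower_envelope L t"
  using assms by (intro lower_envelope_greatest) auto

lemma lower_envelope_mono:
  assumes "L \<noteq> {}" "L \<subseteq> {0..} \<times> {0..}" "0 \<le> t" "t \<le> u"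
  shows "lower_envelope L t \<le> lower_envelope L u"
proof (rule lower_envelope_greatest[OF assms(1)])
  fix m c assume mc: "(m, c) \<in> L"
  then have "m * t \<le> m * u" using assms(2,4) by (intro mult_left_mono) auto
  then show "lower_envelope L t \<le> m * u + c"
    using lower_envelope_le[OF assms(2,3) mc] by linarith
qed

text \<open>Of any two lines, the flatter one bounds the envelope at \<open>t + u\<close> by the sum of
  their values at \<open>t\<close> and \<open>u\<close>.\<close>
lemma lower_envelope_subadditive:
  assumes L: "L \<noteq> {}" "L \<subseteq> {0..} \<times> {0..}" and "0 \<le> t" "0 \<le> u"
  shows "lower_envelope L (t + u) \<le> lower_envelope L t + lower_envelope L u"
proof -
  have two_lines: "lower_envelope L (t + u) \<le> (m * t + c) + (m' * u + c')"
    if "(m, c) \<in> L" "(m', c') \<in> L" for m c m' c'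
  proof (cases "m \<le> m'")
    case True
    have "lower_envelope L (t + u) \<le> m * t + c + m * u"
      using lower_envelope_le[OF L(2) _ that(1), of "t + u"] assms by (simp add: algebra_simps)
    also have "m * u \<le> m' * u + c'"
      using mult_right_mono[OF True \<open>0 \<le> u\<close>] that(2) L(2) by auto
    finally show ?thesis by linarith
  next
    case False
    have "lower_envelope L (t + u) \<le> m' * u + c' + m' * t"
      using lower_envelope_le[OF L(2) _ that(2), of "t + u"] assms by (simp add: algebra_simps)
    also have "m' * t \<le> m * t + c"
      using mult_right_mono[of m' m t] False \<open>0 \<le> t\<close> that(1) L(2) by auto
    finally show ?thesis by linarith
  qed
  have "lower_envelope L (t + u) - (m' * u + c') \<le> lower_envelope L t" if "(m', c') \<in> L" for m' c'
    using two_lines[OF _ that] by (intro lower_envelope_greatest[OF L(1)]) (simp add: algebra_simps)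
  then have "lower_envelope L (t + u) - lower_envelope L t \<le> lower_envelope L u"
    by (intro lower_envelope_greatest[OF L(1)]) (simp add: algebra_simps)
  then show ?thesis by simp
qed

lemma concave_on_lower_envelope:
  assumes L: "L \<noteq> {}" "L \<subseteq> {0..} \<times> {0..}"
  shows "concave_on {0..} (lower_envelope L)"
  unfolding concave_on_iff
proof (intro conjI ballI allI impI)
  fix x y u v :: real
  assume xy: "x \<in> {0..}" "y \<in> {0..}" and uv: "0 \<le> u" "0 \<le> v" "u + v = 1"
  show "u * lower_envelope L x + v * lower_envelope L y \<le> lower_envelope L (u *\<^sub>R x + v *\<^sub>R y)"
  proof (rule lower_envelope_greatest[OF L(1)])
    fix m c assume mc: "(m, c) \<in> L"
    have "u * lower_envelope L x + v * lower_envelope L y \<le> u * (m * x + c) + v * (m * y + c)"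
      using lower_envelope_le[OF L(2) _ mc] xy uv by (intro add_mono mult_left_mono) auto
    also have "\<dots> = m * (u *\<^sub>R x + v *\<^sub>R y) + (u + v) * c"
      by (simp add: algebra_simps)
    also have "\<dots> = m * (u *\<^sub>R x + v *\<^sub>R y) + c"
      using uv(3) by simp
    finally show "u * lower_envelope L x + v * lower_envelope L y \<le> m * (u *\<^sub>R x + v *\<^sub>R y) + c" .
  qed
qed (rule convex_real_interval)

lemma lipschitz_on_lower_envelope:
  assumes L: "L \<noteq> {}" "L \<subseteq> {0..C} \<times> {0..}"
  shows "C-lipschitz_on {0..} (lower_envelope L)"
proof (rule lipschitz_onI)
  have L0: "L \<subseteq> {0..} \<times> {0..}" using L(2) by auto
  have one_side: "lower_envelope L y - C * \<bar>x - y\<bar> \<le> lower_envelope L x"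
    if "0 \<le> x" "0 \<le> y" for x y
  proof (rule lower_envelope_greatest[OF L(1)])
    fix m c assume mc: "(m, c) \<in> L"
    have "m * (y - x) \<le> m * \<bar>x - y\<bar>"
      using mc L(2) by (intro mult_left_mono) auto
    also have "\<dots> \<le> C * \<bar>x - y\<bar>"
      using mc L(2) by (intro mult_right_mono) auto
    finally have "m * (y - x) \<le> C * \<bar>x - y\<bar>" .
    then show "lower_envelope L y - C * \<bar>x - y\<bar> \<le> m * x + c"
      using lower_envelope_le[OF L0 that(2) mc] by (simp add: algebra_simps)
  qed
  fix x y :: real assume "x \<in> {0..}" "y \<in> {0..}"
  then show "dist (lower_envelope L x) (lower_envelope L y) \<le> C * dist x y"
    using one_side[of x y] one_side[of y x] by (auto simp: dist_real_def abs_minus_commute)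
next
  show "0 \<le> C" using assms by fastforce
qed

lemma lower_envelope_finite_attained:
  assumes "finite L" "L \<noteq> {}"
  obtains m c where "(m, c) \<in> L" "lower_envelope L t = m * t + c"
proof -
  have "lower_envelope L t \<in> (\<lambda>(m, c). m * t + c) ` L"
    unfolding lower_envelope_def using assms by (simp add: cInf_eq_Min)
  then show ?thesis using that by auto
qed

lemma lower_envelope_finite_le:
  assumes "finite L" "(m, c) \<in> L"
  shows "lower_envelope L t \<le> m * t + c"
  unfolding lower_envelope_def using assms by (auto intro: cInf_lower2[of "m * t + c"])

lemma lower_envelope_eq_subfamily:
  assumes "F \<subseteq> L" "F \<noteq> {}" "L \<subseteq> {0..} \<times> {0..}" "0 \<le> t"
    and dominated: "\<And>m c. (m, c) \<in> L \<Longrightarrow> \<exists>(m', c')\<in>F. m' * t + c' \<le> m * t + c"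
  shows "lower_envelope L t = lower_envelope F t"
proof (rule antisym)
  have F: "F \<subseteq> {0..} \<times> {0..}" using assms(1,3) by blast
  show "lower_envelope L t \<le> lower_envelope F t"
    using assms(1-4) by (intro lower_envelope_greatest lower_envelope_le) auto
  show "lower_envelope F t \<le> lower_envelope L t"
  proof (rule lower_envelope_greatest)
    fix m c assume "(m, c) \<in> L"
    then obtain m' c' where "(m', c') \<in> F" "m' * t + c' \<le> m * t + c"
      using dominated by blast
    then show "lower_envelope F t \<le> m * t + c"
      using lower_envelope_le[OF F assms(4)] by fastforce
  qed (use assms(1,2) in blast)
qed

lemma crossing_point_between:
  fixes m c m' c' s t :: real
  assumes "m * s + c \<le> m' * s + c'" "m' * t + c' < m * t + c"
  shows "(c' - c) / (m - m') \<in> {s..<t} \<union> {t<..s}"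
proof -
  define r where "r = (c' - c) / (m - m')"
  have "m \<noteq> m'" using assms by auto
  then have r: "m * u + c - (m' * u + c') = (m - m') * (u - r)" for u
    unfolding r_def by (simp add: field_simps)
  have "(m - m') * (s - r) \<le> 0"
    using assms(1) r[of s] by linarith
  moreover have "0 < (m - m') * (t - r)"
    using assms(2) r[of t] by linarith
  ultimately have "r \<in> {s..<t} \<union> {t<..s}"
    by (auto simp: zero_less_mult_iff mult_le_0_iff)
  then show ?thesis by (simp add: r_def)
qed

text \<open>The breakpoints are the crossing points of the finitely many lines: between two
  consecutive ones, the line that is lowest at the midpoint stays lowest.\<close>
lemma lower_envelope_finite_pieces:
  assumes "finite L" "L \<noteq> {}" "a \<le> b"
  obtains P where "finite P" "a \<in> P" "b \<in> P" "P \<subseteq> {a..b}"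
    "\<And>x y. x \<in> P \<Longrightarrow> y \<in> P \<Longrightarrow> x < y \<Longrightarrow> {x<..<y} \<inter> P = {} \<Longrightarrow>
      \<exists>m c. \<forall>t\<in>{x..y}. lower_envelope L t = m * t + c"
proof -
  define R where "R = (\<lambda>((m, c), (m', c')). (c' - c) / (m - m')) ` (L \<times> L)"
  define P where "P = {a, b} \<union> ({a..b} \<inter> R)"
  have "finite P" unfolding P_def R_def using assms(1) by simp
  have "a \<in> P" "b \<in> P" unfolding P_def by simp_all
  have "P \<subseteq> {a..b}" unfolding P_def using assms(3) by auto
  have "\<exists>m c. \<forall>t\<in>{x..y}. lower_envelope L t = m * t + c"
    if xy: "x \<in> P" "y \<in> P" "x < y" "{x<..<y} \<inter> P = {}" for x y
  proof -
    define s where "s = (x + y) / 2"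
    have s: "x < s" "s < y" unfolding s_def using xy by auto
    obtain m c where mc: "(m, c) \<in> L" "lower_envelope L s = m * s + c"
      using lower_envelope_finite_attained[OF assms(1,2)] by blast
    have lowest: "m * t + c \<le> m' * t + c'" if t: "t \<in> {x..y}" and mc': "(m', c') \<in> L" for t m' c'
    proof (rule ccontr)
      assume lower: "\<not> m * t + c \<le> m' * t + c'"
      define r where "r = (c' - c) / (m - m')"
      have "r \<in> {s..<t} \<union> {t<..s}"
        unfolding r_def using lower_envelope_finite_le[OF assms(1) mc', of s] mc lower
        by (intro crossing_point_between) auto
      then have "r \<in> {x<..<y}" using s t by auto
      moreover have "r \<in> R"
        unfolding R_def r_def using mc(1) mc' by (intro rev_image_eqI[of "((m, c), (m', c'))"]) auto
      moreover have "{x..y} \<subseteq> {a..b}" using xy \<open>P \<subseteq> {a..b}\<close> by auto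
      ultimately have "r \<in> {x<..<y} \<inter> P" unfolding P_def by fastforce
      then show False using xy(4) by blast
    qed
    have "lower_envelope L t = m * t + c" if "t \<in> {x..y}" for t
      using lower_envelope_finite_le[OF assms(1) mc(1)] lowest[OF that] assms(2)
      by (intro antisym lower_envelope_greatest) auto
    then show ?thesis by blast
  qed
  then show ?thesis
    using that \<open>finite P\<close> \<open>a \<in> P\<close> \<open>b \<in> P\<close> \<open>P \<subseteq> {a..b}\<close> by blast
qed

lemma piecewise_linear_onI_lower_envelope:
  assumes "\<And>a b. a \<in> I \<Longrightarrow> b \<in> I \<Longrightarrow> a \<le> b \<Longrightarrow>
    \<exists>L. finite L \<and> L \<noteq> {} \<and> (\<forall>t\<in>{a..b}. f t = lower_envelope L t)"
  shows "piecewise_linear_on I f"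
  unfolding piecewise_linear_on_def
proof (intro allI impI)
  fix a b assume ab: "a \<in> I \<and> b \<in> I \<and> a \<le> b"
  then obtain L where L: "finite L" "L \<noteq> {}" and f: "\<forall>t\<in>{a..b}. f t = lower_envelope L t"
    using assms[of a b] by blast
  obtain P where P: "finite P" "a \<in> P" "b \<in> P" "P \<subseteq> {a..b}"
    and pieces: "\<And>x y. x \<in> P \<Longrightarrow> y \<in> P \<Longrightarrow> x < y \<Longrightarrow> {x<..<y} \<inter> P = {} \<Longrightarrow>
      \<exists>m c. \<forall>t\<in>{x..y}. lower_envelope L t = m * t + c"
    using lower_envelope_finite_pieces[OF L] ab by blast
  show "\<exists>P. finite P \<and> a \<in> P \<and> b \<in> P \<and> P \<subseteq> {a..b} \<and>
      (\<forall>x y. x \<in> P \<and> y \<in> P \<and> x < y \<and> {x<..<y} \<inter> P = {} \<longrightarrow>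
        (\<exists>m c. \<forall>t\<in>{x..y}. f t = m * t + c))"
  proof (intro exI[of _ P] conjI P allI impI, elim conjE)
    fix x y assume xy: "x \<in> P" "y \<in> P" "x < y" "{x<..<y} \<inter> P = {}"
    then obtain m c where "\<forall>t\<in>{x..y}. lower_envelope L t = m * t + c"
      using pieces by blast
    moreover have "{x..y} \<subseteq> {a..b}" using xy P(4) by auto
    ultimately show "\<exists>m c. \<forall>t\<in>{x..y}. f t = m * t + c"
      using f by (metis subset_iff)
  qed
qed

section \<open>The exponents \<open>\<phi>\<^sub>i\<close>\<close>

definition owner :: "nat \<Rightarrow> nat" where
  "owner n = fst (prod_decode n)"

lemma owner_prod_encode [simp]: "owner (prod_encode (i, m)) = i"
  by (simp add: owner_def)

definition phi_lines :: "nat \<Rightarrow> (real \<times> real) set" where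
  "phi_lines i = insert (1, 0) ((\<lambda>n. (1 / 2 ^ n, 2 ^ n)) ` {n. owner n \<noteq> i})"

definition phi :: "nat \<Rightarrow> real \<Rightarrow> real" where
  "phi i = lower_envelope (phi_lines i)"

lemma phi_lines_ne [simp]: "phi_lines i \<noteq> {}"
  by (simp add: phi_lines_def)

lemma phi_lines_nonneg: "phi_lines i \<subseteq> {0..} \<times> {0..}"
  by (auto simp: phi_lines_def)

lemma phi_le_self: "0 \<le> t \<Longrightarrow> phi i t \<le> t"
  using lower_envelope_le[OF phi_lines_nonneg, of t 1 0 i] by (simp add: phi_def phi_lines_def)

lemma phi_le_line: "0 \<le> t \<Longrightarrow> owner n \<noteq> i \<Longrightarrow> phi i t \<le> t / 2 ^ n + 2 ^ n"
  using lower_envelope_le[OF phi_lines_nonneg, of t "1 / 2 ^ n" "2 ^ n" i]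
  by (simp add: phi_def phi_lines_def)

lemma phi_greatest:
  assumes "y \<le> t" "\<And>n. owner n \<noteq> i \<Longrightarrow> y \<le> t / 2 ^ n + 2 ^ n"
  shows "y \<le> phi i t"
  unfolding phi_def using assms by (intro lower_envelope_greatest) (auto simp: phi_lines_def)

lemma phi_nonneg: "0 \<le> t \<Longrightarrow> 0 \<le> phi i t"
  unfolding phi_def using phi_lines_nonneg by (intro lower_envelope_nonneg) auto

lemma phi_zero [simp]: "phi i 0 = 0"
  using phi_le_self[of 0 i] phi_nonneg[of 0 i] by simp

lemma phi_mono: "0 \<le> t \<Longrightarrow> t \<le> u \<Longrightarrow> phi i t \<le> phi i u"
  unfolding phi_def using phi_lines_nonneg by (intro lower_envelope_mono) auto

lemma phi_subadditive: "0 \<le> t \<Longrightarrow> 0 \<le> u \<Longrightarrow> phi i (t + u) \<le> phi i t + phi i u"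
  unfolding phi_def using phi_lines_nonneg by (intro lower_envelope_subadditive) auto

lemma phi_ge_one: "1 \<le> t \<Longrightarrow> 1 \<le> phi i t"
proof (rule phi_greatest)
  fix n assume "1 \<le> t"
  have "(1::real) \<le> 2 ^ n" "0 \<le> t / 2 ^ n" using \<open>1 \<le> t\<close> by simp_all
  then show "1 \<le> t / 2 ^ n + 2 ^ n" by linarith
qed

lemma phi_ge:
  assumes "1 \<le> B" "B * B \<le> t"
  shows "B \<le> phi i t"
proof -
  have "B * 1 \<le> B * B" using assms(1) by (intro mult_left_mono) auto
  then have Bt: "B \<le> t" using assms(2) by simp
  have "B \<le> t / 2 ^ n + 2 ^ n" for n :: nat
  proof (cases "B \<le> 2 ^ n")
    case False
    then have "B * 2 ^ n \<le> B * B" using assms(1) by (intro mult_left_mono) auto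
    then have "B \<le> t / 2 ^ n" using assms(2) by (simp add: le_divide_eq)
    moreover have "(0::real) \<le> 2 ^ n" by simp
    ultimately show ?thesis by linarith
  next
    case True
    moreover have "0 \<le> t / 2 ^ n" using Bt assms(1) by simp
    ultimately show ?thesis by linarith
  qed
  with Bt show ?thesis by (intro phi_greatest)
qed

lemma sq_div_add_ge_five_halves:
  fixes u w :: real
  assumes "0 < u" "0 < w" "2 * u \<le> w \<or> 2 * w \<le> u"
  shows "5 / 2 * u \<le> u * u / w + w"
proof -
  have "0 \<le> (w - 2 * u) * (2 * w - u)"
    using assms by (auto intro: mult_nonneg_nonneg mult_nonpos_nonpos)
  then have "5 / 2 * u * w \<le> u * u + w * w" by (simp add: algebra_simps)
  then show ?thesis using assms(2) by (simp add: field_simps)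
qed

text \<open>At \<open>t = 4^n\<close> the line of index \<open>n\<close> takes the value \<open>2^(n+1)\<close>, while all other
  lines are at least \<open>5/2 * 2^n\<close>; the owner of \<open>n\<close> is the only index missing that line.\<close>
lemma phi_owner_four_pow_ge:
  assumes "owner n = j" "2 \<le> n"
  shows "5 / 2 * 2 ^ n \<le> phi j (4 ^ n)"
proof (rule phi_greatest)
  have four: "(4::real) ^ n = 2 ^ n * 2 ^ n"
    by (metis power_mult_distrib mult_2 numeral_Bit0 numeral_times_numeral semiring_norm(2))
  have "(4::real) \<le> 2 ^ n" using power_increasing[OF assms(2), of "2::real"] by simp
  then show "5 / 2 * 2 ^ n \<le> (4::real) ^ n" unfolding four by (intro mult_right_mono) auto
  fix m assume "owner m \<noteq> j"
  then have "m \<noteq> n" using assms(1) by blast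
  then have "2 * 2 ^ n \<le> (2::real) ^ m \<or> 2 * 2 ^ m \<le> (2::real) ^ n"
    by (metis linorder_neqE_nat Suc_leI power_Suc power_increasing one_le_numeral)
  then show "5 / 2 * 2 ^ n \<le> (4::real) ^ n / 2 ^ m + 2 ^ m"
    unfolding four by (intro sq_div_add_ge_five_halves) auto
qed

section \<open>The submultiplicative functions \<open>S\<^sub>i\<close>\<close>

definition submult_line :: "nat \<Rightarrow> nat \<Rightarrow> real \<times> real" where
  "submult_line i k = (1 / 2 ^ k, 2 powr phi i k - 1 / 2 ^ k)"

definition submult_seq :: "nat \<Rightarrow> real \<Rightarrow> real" where
  "submult_seq i = lower_envelope (range (submult_line i))"

lemma submult_line_value:
  "submult_line i k = (m, c) \<Longrightarrow> m * x + c = (x - 1) / 2 ^ k + 2 powr phi i k"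
  by (auto simp: submult_line_def diff_divide_distrib)

lemma submult_line_zero [simp]: "submult_line i 0 = (1, 0)"
  by (simp add: submult_line_def)

lemma one_le_two_powr_phi: "1 \<le> 2 powr phi i (real k)"
  using phi_nonneg[of "real k" i] by (simp add: ge_one_powr_ge_zero)

lemma submult_lines_subset: "range (submult_line i) \<subseteq> {0..1} \<times> {0..}"
proof -
  have slope: "1 / 2 ^ k \<le> (1::real)" for k :: nat by simp
  have "0 \<le> 2 powr phi i k - 1 / 2 ^ k" for k :: nat
    using slope[of k] one_le_two_powr_phi[of i k] by linarith
  with slope show ?thesis unfolding submult_line_def by auto
qed

lemma submult_lines_nonneg: "range (submult_line i) \<subseteq> {0..} \<times> {0..}"
  using submult_lines_subset by fastforce

lemma submult_seq_le:
  assumes "0 \<le> x"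
  shows "submult_seq i x \<le> (x - 1) / 2 ^ k + 2 powr phi i k"
proof -
  obtain m c where mc: "submult_line i k = (m, c)" by fastforce
  then have "submult_seq i x \<le> m * x + c"
    unfolding submult_seq_def by (intro lower_envelope_le[OF submult_lines_nonneg assms]) (metis rangeI)
  then show ?thesis using submult_line_value[OF mc] by simp
qed

lemma submult_seq_greatest:
  "(\<And>k. y \<le> (x - 1) / 2 ^ k + 2 powr phi i k) \<Longrightarrow> y \<le> submult_seq i x"
  unfolding submult_seq_def
  by (intro lower_envelope_greatest) (auto simp: submult_line_value)

text \<open>On \<open>[1, B]\<close> the lines with index beyond \<open>B\<^sup>2\<close> lie above the line \<open>k = 0\<close>,
  which is the identity.\<close>
lemma submult_seq_eq_finite:
  assumes "1 \<le> x" "x \<le> real B"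
  shows "submult_seq i x = lower_envelope (submult_line i ` {..B * B}) x"
  unfolding submult_seq_def
proof (rule lower_envelope_eq_subfamily)
  fix m c assume "(m, c) \<in> range (submult_line i)"
  then obtain k where mc: "submult_line i k = (m, c)" by (metis rangeE)
  show "\<exists>(m', c')\<in>submult_line i ` {..B * B}. m' * x + c' \<le> m * x + c"
  proof (cases "k \<le> B * B")
    case False
    then have "real B * real B \<le> real k"
      by (metis nat_le_linear of_nat_le_iff of_nat_mult)
    have "x \<le> real B" by (fact assms(2))
    also have "\<dots> < 2 ^ B" by (metis less_exp of_nat_less_iff of_nat_numeral of_nat_power)
    also have "\<dots> = 2 powr real B" by (simp add: powr_realpow)
    also have "\<dots> \<le> 2 powr phi i k"
      using \<open>real B * real B \<le> real k\<close> assms by (intro powr_mono phi_ge) auto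
    also have "\<dots> \<le> m * x + c" using assms(1) submult_line_value[OF mc] by simp
    finally have "1 * x + 0 \<le> m * x + c" by simp
    moreover have "(1, 0) \<in> submult_line i ` {..B * B}"
      using rev_image_eqI[of 0 "{..B * B}" "(1, 0)" "submult_line i"] by simp
    ultimately show ?thesis by blast
  next
    case True
    then have "(m, c) \<in> submult_line i ` {..B * B}"
      using rev_image_eqI[of k "{..B * B}" "(m, c)" "submult_line i"] mc by simp
    then show ?thesis by blast
  qed
qed (use assms submult_lines_nonneg in auto)

lemma submult_seq_attained:
  assumes "1 \<le> x"
  obtains k where "submult_seq i x = (x - 1) / 2 ^ k + 2 powr phi i k"
proof -
  define B where "B = nat \<lceil>x\<rceil>"
  have B: "x \<le> real B" unfolding B_def by linarith
  have "finite (submult_line i ` {..B * B})" "submult_line i ` {..B * B} \<noteq> {}" by auto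
  then obtain m c where mc: "(m, c) \<in> submult_line i ` {..B * B}"
    "lower_envelope (submult_line i ` {..B * B}) x = m * x + c"
    by (rule lower_envelope_finite_attained)
  then obtain k where "submult_line i k = (m, c)" by auto
  then show ?thesis
    using that submult_seq_eq_finite[OF assms B] mc(2) submult_line_value by metis
qed

lemma submult_seq_id: "1 \<le> x \<Longrightarrow> x \<le> 2 \<Longrightarrow> submult_seq i x = x"
proof (rule antisym)
  assume x: "1 \<le> x" "x \<le> 2"
  show "submult_seq i x \<le> x" using submult_seq_le[of x i 0] x by simp
  show "x \<le> submult_seq i x"
  proof (rule submult_seq_greatest)
    fix k :: nat
    show "x \<le> (x - 1) / 2 ^ k + 2 powr phi i k"
    proof (cases "k = 0")
      case False
      then have "2 powr 1 \<le> 2 powr phi i k" by (intro powr_mono phi_ge_one) auto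
      then have "2 \<le> 2 powr phi i k" by simp
      moreover have "0 \<le> (x - 1) / 2 ^ k" using x by simp
      ultimately show ?thesis using x by linarith
    qed simp
  qed
qed

lemma submult_seq_strict_mono: "strict_mono_on {1..} (submult_seq i)"
proof (rule strict_mono_onI)
  fix x y :: real assume "x \<in> {1..}" "y \<in> {1..}" "x < y"
  moreover obtain k where "submult_seq i y = (y - 1) / 2 ^ k + 2 powr phi i k"
    using \<open>y \<in> {1..}\<close> submult_seq_attained by auto
  moreover have "(x - 1) / 2 ^ k < (y - 1) / 2 ^ k"
    using \<open>x < y\<close> by (simp add: divide_strict_right_mono)
  ultimately show "submult_seq i x < submult_seq i y"
    using submult_seq_le[of x i k] by simp
qed

lemma submult_seq_submultiplicative:
  assumes "1 \<le> x" "1 \<le> y"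
  shows "submult_seq i (x * y) \<le> submult_seq i x * submult_seq i y"
proof -
  obtain k where k: "submult_seq i x = (x - 1) / 2 ^ k + 2 powr phi i k"
    using submult_seq_attained[OF assms(1)] by blast
  obtain l where l: "submult_seq i y = (y - 1) / 2 ^ l + 2 powr phi i l"
    using submult_seq_attained[OF assms(2)] by blast
  define a b v w where "a = 1 / (2::real) ^ k" "b = 1 / (2::real) ^ l" "v = 2 powr phi i k" "w = 2 powr phi i l"
  have ab: "0 \<le> a" "a \<le> 1" "0 \<le> b" "b \<le> 1" and vw: "1 \<le> v" "1 \<le> w"
    unfolding a_b_v_w_def using one_le_two_powr_phi by auto
  have "1 \<le> x * y" using assms by (metis mult_mono' mult_1 zero_le_one)
  then have "submult_seq i (x * y) \<le> (x * y - 1) / 2 ^ (k + l) + 2 powr phi i (real k + real l)"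
    using submult_seq_le[of "x * y" i "k + l"] by simp
  also have "\<dots> \<le> (x * y - 1) * (a * b) + v * w"
    using phi_subadditive[of "real k" "real l" i]
    by (simp add: a_b_v_w_def power_add powr_add[symmetric])
  also have "\<dots> \<le> (a * (x - 1) + v) * (b * (y - 1) + w)"
  proof -
    have "0 \<le> a * (x - 1) * (w - b) + b * (y - 1) * (v - a)"
      using ab vw assms by (intro add_nonneg_nonneg mult_nonneg_nonneg) auto
    then show ?thesis by (simp add: algebra_simps)
  qed
  also have "\<dots> = submult_seq i x * submult_seq i y"
    unfolding k l a_b_v_w_def by simp
  finally show ?thesis .
qed

lemma submultiplicative_inf_submult_seq: "submultiplicative_inf (submult_seq i)"
  unfolding submultiplicative_inf_def
proof (intro conjI ballI allI impI)
  show "piecewise_linear_on {1..} (submult_seq i)"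
  proof (rule piecewise_linear_onI_lower_envelope)
    fix a b :: real assume "a \<in> {1..}" "b \<in> {1..}" "a \<le> b"
    define B where "B = nat \<lceil>b\<rceil>"
    have "submult_seq i t = lower_envelope (submult_line i ` {..B * B}) t" if "t \<in> {a..b}" for t
    proof -
      have "1 \<le> t" "t \<le> real B" using that \<open>a \<in> {1..}\<close> unfolding B_def by auto linarith
      then show ?thesis by (rule submult_seq_eq_finite)
    qed
    moreover have "finite (submult_line i ` {..B * B})" "submult_line i ` {..B * B} \<noteq> {}" by auto
    ultimately show "\<exists>L. finite L \<and> L \<noteq> {} \<and> (\<forall>t\<in>{a..b}. submult_seq i t = lower_envelope L t)"
      by blast
  qed
  have "1-lipschitz_on {0..} (submult_seq i)"
    unfolding submult_seq_def using submult_lines_subset by (intro lipschitz_on_lower_envelope) auto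
  then show "continuous_on {1..} (submult_seq i)"
    by (rule continuous_on_subset[OF lipschitz_on_continuous_on]) auto
  have "concave_on {0..} (submult_seq i)"
    unfolding submult_seq_def using submult_lines_nonneg by (intro concave_on_lower_envelope) auto
  then show "concave_on {1..} (submult_seq i)"
    unfolding concave_on_def by (rule convex_on_subset) auto
qed (auto simp: submult_seq_strict_mono submult_seq_id submult_seq_submultiplicative)

lemma submult_seq_ge_one: "1 \<le> x \<Longrightarrow> 1 \<le> submult_seq i x"
proof (rule submult_seq_greatest)
  fix k :: nat assume "1 \<le> x"
  then have "0 \<le> (x - 1) / 2 ^ k" by simp
  then show "1 \<le> (x - 1) / 2 ^ k + 2 powr phi i k" using one_le_two_powr_phi[of i k] by linarith
qed

section \<open>Separation\<close>

lemma real_four_pow: "real (4 ^ n) = 2 ^ n * 2 ^ n"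
  by (simp add: power_mult_distrib[symmetric])

lemma submult_seq_nonowner_le:
  assumes "owner n \<noteq> i"
  shows "submult_seq i (2 ^ (4 ^ n + 2 ^ (n + 1))) \<le> 2 ^ (2 ^ (n + 1) + 1)"
proof -
  define K P where "K = (4::nat) ^ n" "P = (2::nat) ^ (n + 1)"
  have "phi i K \<le> real K / 2 ^ n + 2 ^ n"
    using assms by (intro phi_le_line) auto
  also have "\<dots> = real P" unfolding K_P_def real_four_pow by simp
  finally have "2 powr phi i K \<le> 2 ^ P" by (simp add: powr_realpow[symmetric])
  have "submult_seq i (2 ^ (K + P)) \<le> (2 ^ (K + P) - 1) / 2 ^ K + 2 powr phi i K"
    by (rule submult_seq_le) simp
  also have "\<dots> \<le> 2 ^ (K + P) / 2 ^ K + 2 ^ P"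
    using \<open>2 powr phi i K \<le> 2 ^ P\<close> by (intro add_mono divide_right_mono) auto
  also have "\<dots> = 2 ^ (P + 1)" by (simp add: power_add)
  finally show ?thesis unfolding K_P_def .
qed

text \<open>Lines of index at most \<open>K - D\<close> are large at \<open>2^(K+P)\<close> through their slope, the
  others through their intercept.\<close>
lemma submult_seq_two_pow_ge:
  assumes "1 \<le> D" "D \<le> K" and phi_ge: "\<And>k. K - D < k \<Longrightarrow> real (P + D) \<le> phi j k"
  shows "2 ^ (P + D - 1) \<le> submult_seq j (2 ^ (K + P))"
proof -
  define x :: real where "x = 2 ^ (K + P)"
  have x: "x = 2 ^ (P + D - 1) * 2 * 2 ^ (K - D)"
  proof -
    have "K + P = (P + D - 1) + 1 + (K - D)" using assms(1,2) by simp
    then show ?thesis unfolding x_def by (simp only: power_add power_one_right)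
  qed
  have "(2::real) ^ 1 \<le> 2 ^ (K + P)" using assms(1,2) by (intro power_increasing) auto
  then have "2 \<le> x" by (simp add: x_def)
  obtain k where k: "submult_seq j x = (x - 1) / 2 ^ k + 2 powr phi j k"
    using submult_seq_attained \<open>2 \<le> x\<close> by (metis one_le_numeral order_trans)
  have "2 ^ (P + D - 1) \<le> submult_seq j x"
  proof (cases "k \<le> K - D")
    case True
    have "(2::real) ^ (P + D - 1) = x / 2 / 2 ^ (K - D)" unfolding x by simp
    also have "\<dots> \<le> (x - 1) / 2 ^ (K - D)" using \<open>2 \<le> x\<close> by (intro divide_right_mono) auto
    also have "\<dots> \<le> (x - 1) / 2 ^ k"
      using \<open>2 \<le> x\<close> True by (intro divide_left_mono power_increasing) auto
    finally show ?thesis unfolding k by (simp add: add_increasing2)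
  next
    case False
    then have "(2::real) ^ (P + D) \<le> 2 powr phi j k"
      using phi_ge by (metis powr_realpow powr_mono one_le_numeral zero_less_numeral not_le)
    moreover have "(2::real) ^ (P + D - 1) \<le> 2 ^ (P + D)" by (intro power_increasing) auto
    moreover have "0 \<le> (x - 1) / 2 ^ k" using \<open>2 \<le> x\<close> by simp
    ultimately show ?thesis unfolding k by linarith
  qed
  then show ?thesis unfolding x_def .
qed

lemma submult_seq_owner_ge:
  assumes "owner n = j" "3 \<le> n"
  shows "2 ^ (2 ^ (n + 1) + 2 ^ (n - 2) - 1) \<le> submult_seq j (2 ^ (4 ^ n + 2 ^ (n + 1)))"
proof -
  define K P D where "K = (4::nat) ^ n" "P = (2::nat) ^ (n + 1)" "D = (2::nat) ^ (n - 2)"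
  have "n = (n - 2) + 2" using assms(2) by simp
  then have "(2::real) ^ n = 2 ^ (n - 2) * 2 ^ 2" by (metis power_add)
  then have pow_n: "(2::real) ^ n = 4 * D" unfolding K_P_D_def by simp
  have P: "real P = 8 * D" unfolding K_P_D_def(2) using pow_n by simp
  have "1 \<le> D" unfolding K_P_D_def by simp
  have "(2::nat) ^ (n - 2) \<le> 2 ^ n" by (intro power_increasing) auto
  also have "\<dots> \<le> 4 ^ n" by (intro power_mono) auto
  finally have "D \<le> K" unfolding K_P_D_def .
  have "real (P + D) \<le> phi j k" if "K - D < k" for k
  proof -
    have "5 / 2 * 2 ^ n \<le> phi j K"
      unfolding K_P_D_def using phi_owner_four_pow_ge[OF assms(1)] assms(2) by simp
    also have "\<dots> \<le> phi j (K - D) + phi j D"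
      using phi_subadditive[of "real (K - D)" "real D" j] \<open>D \<le> K\<close> by (simp add: of_nat_diff)
    also have "\<dots> \<le> phi j k + D"
      using that phi_mono[of "real (K - D)" "real k" j] phi_le_self[of "real D" j] by simp
    finally show ?thesis using pow_n P by simp
  qed
  with \<open>1 \<le> D\<close> \<open>D \<le> K\<close> have "2 ^ (P + D - 1) \<le> submult_seq j (2 ^ (K + P))"
    by (rule submult_seq_two_pow_ge)
  then show ?thesis unfolding K_P_D_def .
qed

lemma submult_seq_gap:
  assumes "owner n = j" "owner n \<noteq> i" "3 \<le> n"
  shows "2 ^ (2 ^ (n - 2) - 2) * submult_seq i (2 ^ (4 ^ n + 2 ^ (n + 1)))
    \<le> submult_seq j (2 ^ (4 ^ n + 2 ^ (n + 1)))"
proof -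
  define D P where "D = (2::nat) ^ (n - 2)" "P = (2::nat) ^ (n + 1)"
  have "(2::nat) ^ 1 \<le> 2 ^ (n - 2)" using assms(3) by (intro power_increasing) auto
  then have "2 \<le> D" by (simp add: D_P_def)
  have "2 ^ (D - 2) * submult_seq i (2 ^ (4 ^ n + P)) \<le> (2::real) ^ (D - 2) * 2 ^ (P + 1)"
    using submult_seq_nonowner_le[OF assms(2)] by (simp add: D_P_def)
  also have "\<dots> = 2 ^ (P + D - 1)"
  proof -
    have "(D - 2) + (P + 1) = P + D - 1" using \<open>2 \<le> D\<close> by simp
    then show ?thesis by (metis power_add)
  qed
  also have "\<dots> \<le> submult_seq j (2 ^ (4 ^ n + P))"
    using submult_seq_owner_ge[OF assms(1,3)] by (simp add: D_P_def)
  finally show ?thesis unfolding D_P_def .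
qed

lemma submult_seq_ratio_unbounded:
  assumes "finite A" "A \<noteq> {}" "j \<notin> A"
  shows "\<exists>n::nat. n \<ge> 1 \<and> submult_seq j (real n) / Max ((\<lambda>i. submult_seq i (real n)) ` A) > M"
proof -
  define n where "n = prod_encode (j, nat \<lceil>M\<rceil> + 3)"
  have owner: "owner n = j" unfolding n_def by simp
  have "nat \<lceil>M\<rceil> + 3 \<le> n" unfolding n_def by (rule le_prod_encode_2)
  define x :: nat where "x = 2 ^ (4 ^ n + 2 ^ (n + 1))"
  have "Max ((\<lambda>i. submult_seq i (real x)) ` A) \<in> (\<lambda>i. submult_seq i (real x)) ` A"
    using assms(1,2) by (intro Max_in) auto
  then obtain i where i: "i \<in> A" "Max ((\<lambda>i. submult_seq i (real x)) ` A) = submult_seq i (real x)"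
    by auto
  have "owner n \<noteq> i" using owner i(1) assms(3) by blast
  have "0 < submult_seq i (real x)"
    using submult_seq_ge_one[of "real x" i] unfolding x_def by simp
  have "M \<le> real (2 ^ (n - 2) - 2)"
    using less_exp[of "n - 2"] \<open>nat \<lceil>M\<rceil> + 3 \<le> n\<close> by linarith
  also have "\<dots> < 2 ^ (2 ^ (n - 2) - 2)"
    by (metis less_exp of_nat_less_iff of_nat_numeral of_nat_power)
  also have "\<dots> \<le> submult_seq j (real x) / submult_seq i (real x)"
    using submult_seq_gap[OF owner \<open>owner n \<noteq> i\<close>] \<open>nat \<lceil>M\<rceil> + 3 \<le> n\<close>
      \<open>0 < submult_seq i (real x)\<close>
    by (simp add: x_def le_divide_eq)
  finally have "M < submult_seq j (real x) / Max ((\<lambda>i. submult_seq i (real x)) ` A)"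
    unfolding i(2) .
  moreover have "1 \<le> x" unfolding x_def by simp
  ultimately show ?thesis by blast
qed

theorem proposition2p6:
  shows "\<exists>S :: nat \<Rightarrow> real \<Rightarrow> real.
    (\<forall>i\<ge>1. submultiplicative_inf (S i)) \<and>
    (\<forall>A j. finite A \<and> A \<noteq> {} \<and> A \<subseteq> {1..} \<and> j \<ge> 1 \<and> j \<notin> A \<longrightarrow>
       (\<forall>M::real. \<exists>n::nat. n \<ge> 1 \<and>
          S j (real n) / Max ((\<lambda>i. S i (real n)) ` A) > M))"
  using submultiplicative_inf_submult_seq submult_seq_ratio_unbounded by blast

end
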